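(* Let $\varphi$ be an INF sentence over $\Sigma$. Then the symbolic INF propagator $S_\varphi$ describes the INF propagator $O_\varphi$: for every four-valued symbolic $\Sigma$-structure $\tilde\Phi$ over $\Sigma_s$ and every two-valued $\Sigma_s$-structure $E$, $S_\varphi(\tilde\Phi)(E)=O_\varphi(\tilde\Phi(E))$.
   Context: Vocabularies are finite sets of predicate symbols. Four-valued structures: truth values $\mathbf{t},\mathbf{f},\mathbf{u},\mathbf{i}$; inverse swaps $\mathbf{t},\mathbf{f}$ and fixes $\mathbf{u},\mathbf{i}$; truth order $\mathbf{f}\le_t\mathbf{u}\le_t\mathbf{t}$, $\mathbf{f}\le_t\mathbf{i}\le_t\mathbf{t}$; precision order $\mathbf{u}\le_p\mathbf{t}\le_p\mathbf{i}$, $\mathbf{u}\le_p\mathbf{f}\le_p\mathbf{i}$. A four-valued $\Sigma$-structure $\tilde I$ has domain $D$ and gives each $P/n\in\Sigma$ a map $D^n\to\{\mathbf{t},\mathbf{f},\mathbf{u},\mathbf{i}\}$. Formula values: atoms via the structure, $\neg$ by inverse, $\wedge,\forall$ by $\le_t$-glb, $\vee,\exists$ by $\le_t$-lub. Encoding: $\mathrm{tf}(\Sigma)=\{P^{ct}/n,P^{cf}/n\mid P/n\in\Sigma\}$; $\mathrm{tf}(\tilde I)$ is the two-valued $\mathrm{tf}(\Sigma)$-structure with $(P^{ct})^{\mathrm{tf}(\tilde I)}=\{\overline{d}\mid P^{\tilde I}(\overline{d})\ge_p\mathbf{t}\}$ and $(P^{cf})^{\mathrm{tf}(\tilde I)}=\{\overline{d}\mid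 P^{\tilde I}(\overline{d})\ge_p\mathbf{f}\}$; $\tilde I\mapsto\mathrm{tf}(\tilde I)$ is a bijection onto two-valued $\mathrm{tf}(\Sigma)$-structures with domain $D$. Formulas $\varphi^{ct},\varphi^{cf}$ over $\mathrm{tf}(\Sigma)$: $(P(\overline{x}))^{ct}=P^{ct}(\overline{x})$, $(P(\overline{x}))^{cf}=P^{cf}(\overline{x})$; $(\neg\varphi)^{ct}=\varphi^{cf}$, $(\neg\varphi)^{cf}=\varphi^{ct}$; $(\varphi\wedge\psi)^{ct}=\varphi^{ct}\wedge\psi^{ct}$, $(\varphi\wedge\psi)^{cf}=\varphi^{cf}\vee\psi^{cf}$; $(\varphi\vee\psi)^{ct}=\varphi^{ct}\vee\psi^{ct}$, $(\varphi\vee\psi)^{cf}=\varphi^{cf}\wedge\psi^{cf}$; $(\forall x\varphi)^{ct}=\forall x\varphi^{ct}$, $(\forall x\varphi)^{cf}=\exists x\varphi^{cf}$; $(\exists x\varphi)^{ct}=\exists x\varphi^{ct}$, $(\exists x\varphi)^{cf}=\forall x\varphi^{cf}$. Symbolic structures: a symbolic two-valued $\Sigma'$-structure $\Phi$ over $\Sigma_s$ assigns each $P/n\in\Sigma'$ a query $\{(x_1,\dots,x_n)\mid\chi\}$ with $\chi$ a formula over $\Sigma_s$; for a $\Sigma_s$-structure $E$, $\Phi(E)$ is the $\Sigma'$-structure with the same domain and $P^{\Phi(E)}=\{\overline{d}\mid E[\overline{x}/\overline{d}]\models\chi\}$; for a formula $\varphi$ over $\Sigma'$, $\Phi(\varphi)$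 replaces each atom $P(\overline{y})$ by $\chi[\overline{x}/\overline{y}]$. A four-valued symbolic $\Sigma$-structure over $\Sigma_s$ is a symbolic two-valued $\mathrm{tf}(\Sigma)$-structure $\tilde\Phi$ over $\Sigma_s$; $\tilde\Phi(E)$ is identified with the four-valued $\Sigma$-structure $\tilde I$ with $\mathrm{tf}(\tilde I)=\tilde\Phi(E)$. The union of queries of equal arity is $\{\overline{x}\mid\psi\}\cup\{\overline{y}\mid\chi\}=\{\overline{z}\mid\psi[\overline{x}/\overline{z}]\vee\chi[\overline{y}/\overline{z}]\}$ with $\overline{z}$ fresh. INF sentences: $\forall\overline{x}(\psi\supset L[\overline{x}])$ with $\psi$ having free variables among $\overline{x}$, $L$ one of $P(\overline{x}),\neg P(\overline{x})$. INF propagator $O_\varphi$: $O_\varphi(\tilde I)$ agrees with $\tilde I$ except $P^{O_\varphi(\tilde I)}(\overline{d})=\mathrm{lub}_{\le_p}\{\mathbf{t},P^{\tilde I}(\overline{d})\}$ (resp. with $\mathbf{f}$ for negative $L$) whenever $\tilde I[\overline{x}/\overline{d}](\psi)\ge_p\mathbf{t}$. Symbolic INF propagator: for $\varphi=\forall\overline{x}(\psi\supset P(\overline{x}))$, $S_\varphi(\tilde\Phi)$ assigns $(P^{ct})^{\tilde\Phi}\cup\{\overline{x}\mid\tilde\Phi(\psi^{ct})\}$ to $P^{ct}$ and the same queries as $\tilde\Phi$ to all other symbols; for $\varphi=\forall\overline{x}(\psi\supset\neg P(\overline{x}))$, it assigns $(P^{cf})^{\tilde\Phi}\cup\{\overline{x}\mid\tilde\Phi(\psi^{ct})\}$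 to $P^{cf}$ and copies the rest. *)

theory Defs
  imports Main
begin

datatype 'p fm =
    Atom 'p "nat list"
  | Neg "'p fm"
  | Conj "'p fm" "'p fm"
  | Disj "'p fm" "'p fm"
  | Forall nat "'p fm"
  | Exists nat "'p fm"

primrec fv :: "'p fm \<Rightarrow> nat set" where
  "fv (Atom P xs) = set xs"
| "fv (Neg \<phi>) = fv \<phi>"
| "fv (Conj \<phi> \<psi>) = fv \<phi> \<union> fv \<psi>"
| "fv (Disj \<phi> \<psi>) = fv \<phi> \<union> fv \<psi>"
| "fv (Forall x \<phi>) = fv \<phi> - {x}"
| "fv (Exists x \<phi>) = fv \<phi> - {x}"

primrec vars :: "'p fm \<Rightarrow> nat set" where
  "vars (Atom P xs) = set xs"
| "vars (Neg \<phi>) = vars \<phi>"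
| "vars (Conj \<phi> \<psi>) = vars \<phi> \<union> vars \<psi>"
| "vars (Disj \<phi> \<psi>) = vars \<phi> \<union> vars \<psi>"
| "vars (Forall x \<phi>) = insert x (vars \<phi>)"
| "vars (Exists x \<phi>) = insert x (vars \<phi>)"

primrec atoms :: "'p fm \<Rightarrow> ('p \<times> nat) set" where
  "atoms (Atom P xs) = {(P, length xs)}"
| "atoms (Neg \<phi>) = atoms \<phi>"
| "atoms (Conj \<phi> \<psi>) = atoms \<phi> \<union> atoms \<psi>"
| "atoms (Disj \<phi> \<psi>) = atoms \<phi> \<union> atoms \<psi>"
| "atoms (Forall x \<phi>) = atoms \<phi>"
| "atoms (Exists x \<phi>) = atoms \<phi>"

definition vocab :: "('p \<times> nat) set \<Rightarrow> bool" where
  "vocab \<Sigma> \<longleftrightarrow> finite \<Sigma> \<and> (\<forall>P n m. (P, n) \<in> \<Sigma> \<longrightarrow> (P, m) \<in> \<Sigma> \<longrightarrow> n = m)"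

definition fm_over :: "('p \<times> nat) set \<Rightarrow> 'p fm \<Rightarrow> bool" where
  "fm_over \<Sigma> \<phi> \<longleftrightarrow> atoms \<phi> \<subseteq> \<Sigma>"

definition fresh :: "nat set \<Rightarrow> nat" where
  "fresh S = (if S = {} then 0 else Suc (Max S))"

primrec subst :: "(nat \<Rightarrow> nat) \<Rightarrow> 'p fm \<Rightarrow> 'p fm" where
  "subst \<sigma> (Atom P xs) = Atom P (map \<sigma> xs)"
| "subst \<sigma> (Neg \<phi>) = Neg (subst \<sigma> \<phi>)"
| "subst \<sigma> (Conj \<phi> \<psi>) = Conj (subst \<sigma> \<phi>) (subst \<sigma> \<psi>)"
| "subst \<sigma> (Disj \<phi> \<psi>) = Disj (subst \<sigma> \<phi>) (subst \<sigma> \<psi>)"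
| "subst \<sigma> (Forall x \<phi>) =
     (let y = fresh (\<sigma> ` (fv \<phi> - {x})) in Forall y (subst (\<sigma>(x := y)) \<phi>))"
| "subst \<sigma> (Exists x \<phi>) =
     (let y = fresh (\<sigma> ` (fv \<phi> - {x})) in Exists y (subst (\<sigma>(x := y)) \<phi>))"

definition ren :: "nat list \<Rightarrow> nat list \<Rightarrow> nat \<Rightarrow> nat" where
  "ren xs ys v = (case map_of (zip xs ys) v of Some y \<Rightarrow> y | None \<Rightarrow> v)"

definition assign :: "nat list \<Rightarrow> 'd list \<Rightarrow> nat \<Rightarrow> 'd" where
  "assign xs ds v = (case map_of (zip xs ds) v of Some d \<Rightarrow> d | None \<Rightarrow> undefined)"

type_synonym ('p, 'd) struct2 = "'p \<Rightarrow> 'd list \<Rightarrow> bool"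

primrec eval :: "('p, 'd) struct2 \<Rightarrow> (nat \<Rightarrow> 'd) \<Rightarrow> 'p fm \<Rightarrow> bool" where
  "eval E a (Atom P xs) = E P (map a xs)"
| "eval E a (Neg \<phi>) = (\<not> eval E a \<phi>)"
| "eval E a (Conj \<phi> \<psi>) = (eval E a \<phi> \<and> eval E a \<psi>)"
| "eval E a (Disj \<phi> \<psi>) = (eval E a \<phi> \<or> eval E a \<psi>)"
| "eval E a (Forall x \<phi>) = (\<forall>d. eval E (a(x := d)) \<phi>)"
| "eval E a (Exists x \<phi>) = (\<exists>d. eval E (a(x := d)) \<phi>)"

datatype tv = T | F | U | I

fun inv :: "tv \<Rightarrow> tv" where
  "inv T = F" | "inv F = T" | "inv U = U" | "inv I = I"

definition leq_t :: "tv \<Rightarrow> tv \<Rightarrow> bool" where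
  "leq_t a b \<longleftrightarrow> a = b \<or> a = F \<or> b = T"

definition leq_p :: "tv \<Rightarrow> tv \<Rightarrow> bool" where
  "leq_p a b \<longleftrightarrow> a = b \<or> a = U \<or> b = I"

definition glb_t :: "tv set \<Rightarrow> tv" where
  "glb_t S = (THE g. (\<forall>x\<in>S. leq_t g x) \<and> (\<forall>h. (\<forall>x\<in>S. leq_t h x) \<longrightarrow> leq_t h g))"

definition lub_t :: "tv set \<Rightarrow> tv" where
  "lub_t S = (THE g. (\<forall>x\<in>S. leq_t x g) \<and> (\<forall>h. (\<forall>x\<in>S. leq_t x h) \<longrightarrow> leq_t g h))"

definition lub_p :: "tv set \<Rightarrow> tv" where
  "lub_p S = (THE g. (\<forall>x\<in>S. leq_p x g) \<and> (\<forall>h. (\<forall>x\<in>S. leq_p x h) \<longrightarrow> leq_p g h))"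

type_synonym ('p, 'd) struct4 = "'p \<Rightarrow> 'd list \<Rightarrow> tv"

primrec val4 :: "('p, 'd) struct4 \<Rightarrow> (nat \<Rightarrow> 'd) \<Rightarrow> 'p fm \<Rightarrow> tv" where
  "val4 J a (Atom P xs) = J P (map a xs)"
| "val4 J a (Neg \<phi>) = inv (val4 J a \<phi>)"
| "val4 J a (Conj \<phi> \<psi>) = glb_t {val4 J a \<phi>, val4 J a \<psi>}"
| "val4 J a (Disj \<phi> \<psi>) = lub_t {val4 J a \<phi>, val4 J a \<psi>}"
| "val4 J a (Forall x \<phi>) = glb_t {val4 J (a(x := d)) \<phi> | d. True}"
| "val4 J a (Exists x \<phi>) = lub_t {val4 J (a(x := d)) \<phi> | d. True}"

section \<open>The tf encoding. Symbol (P, True) is P^ct, (P, False) is P^cf.\<close>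

definition tf_voc :: "('p \<times> nat) set \<Rightarrow> (('p \<times> bool) \<times> nat) set" where
  "tf_voc \<Sigma> = {((P, b), n) | P b n. (P, n) \<in> \<Sigma>}"

definition tf :: "('p, 'd) struct4 \<Rightarrow> ('p \<times> bool, 'd) struct2" where
  "tf J = (\<lambda>(P, b) ds. if b then leq_p T (J P ds) else leq_p F (J P ds))"

fun ct :: "'p fm \<Rightarrow> ('p \<times> bool) fm" and cf :: "'p fm \<Rightarrow> ('p \<times> bool) fm" where
  "ct (Atom P xs) = Atom (P, True) xs"
| "cf (Atom P xs) = Atom (P, False) xs"
| "ct (Neg \<phi>) = cf \<phi>"
| "cf (Neg \<phi>) = ct \<phi>"
| "ct (Conj \<phi> \<psi>) = Conj (ct \<phi>) (ct \<psi>)"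
| "cf (Conj \<phi> \<psi>) = Disj (cf \<phi>) (cf \<psi>)"
| "ct (Disj \<phi> \<psi>) = Disj (ct \<phi>) (ct \<psi>)"
| "cf (Disj \<phi> \<psi>) = Conj (cf \<phi>) (cf \<psi>)"
| "ct (Forall x \<phi>) = Forall x (ct \<phi>)"
| "cf (Forall x \<phi>) = Exists x (cf \<phi>)"
| "ct (Exists x \<phi>) = Exists x (ct \<phi>)"
| "cf (Exists x \<phi>) = Forall x (cf \<phi>)"

text \<open>A query {(x_1,...,x_n) | chi} is the pair (xs, chi).\<close>
type_synonym 's query = "nat list \<times> 's fm"

type_synonym ('q, 's) symstruct = "'q \<Rightarrow> 's query"

definition is_symstruct :: "('q \<times> nat) set \<Rightarrow> ('s \<times> nat) set \<Rightarrow> ('q, 's) symstruct \<Rightarrow> bool" where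
  "is_symstruct \<Sigma>' \<Sigma>s \<Phi> \<longleftrightarrow>
     (\<forall>Q n. (Q, n) \<in> \<Sigma>' \<longrightarrow>
        length (fst (\<Phi> Q)) = n \<and> distinct (fst (\<Phi> Q)) \<and>
        fv (snd (\<Phi> Q)) \<subseteq> set (fst (\<Phi> Q)) \<and> fm_over \<Sigma>s (snd (\<Phi> Q)))"

definition sym_apply :: "('q, 's) symstruct \<Rightarrow> ('s, 'd) struct2 \<Rightarrow> ('q, 'd) struct2" where
  "sym_apply \<Phi> E = (\<lambda>Q ds. length ds = length (fst (\<Phi> Q)) \<and>
                          eval E (assign (fst (\<Phi> Q)) ds) (snd (\<Phi> Q)))"

primrec sym_fm :: "('q, 's) symstruct \<Rightarrow> 'q fm \<Rightarrow> 's fm" where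
  "sym_fm \<Phi> (Atom Q ys) = subst (ren (fst (\<Phi> Q)) ys) (snd (\<Phi> Q))"
| "sym_fm \<Phi> (Neg \<phi>) = Neg (sym_fm \<Phi> \<phi>)"
| "sym_fm \<Phi> (Conj \<phi> \<psi>) = Conj (sym_fm \<Phi> \<phi>) (sym_fm \<Phi> \<psi>)"
| "sym_fm \<Phi> (Disj \<phi> \<psi>) = Disj (sym_fm \<Phi> \<phi>) (sym_fm \<Phi> \<psi>)"
| "sym_fm \<Phi> (Forall x \<phi>) = Forall x (sym_fm \<Phi> \<phi>)"
| "sym_fm \<Phi> (Exists x \<phi>) = Exists x (sym_fm \<Phi> \<phi>)"

definition sym4_apply :: "('p \<times> bool, 's) symstruct \<Rightarrow> ('s, 'd) struct2 \<Rightarrow> ('p, 'd) struct4" where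
  "sym4_apply \<Phi> E = (THE J. tf J = sym_apply \<Phi> E)"

definition query_union :: "'s query \<Rightarrow> 's query \<Rightarrow> 's query" where
  "query_union q1 q2 =
     (let (xs, \<psi>) = q1; (ys, \<chi>) = q2;
          m = fresh (set xs \<union> set ys \<union> vars \<psi> \<union> vars \<chi>);
          zs = [m ..< m + length xs]
      in (zs, Disj (subst (ren xs zs) \<psi>) (subst (ren ys zs) \<chi>)))"

text \<open>InfS xs psi P pos stands for  \<forall>xs (psi \<supset> P(xs))  (pos) or  \<forall>xs (psi \<supset> \<not>P(xs))  (not pos).\<close>
datatype 'p inf = InfS "nat list" "'p fm" 'p bool

definition inf_over :: "('p \<times> nat) set \<Rightarrow> 'p inf \<Rightarrow> bool" where
  "inf_over \<Sigma> \<phi> = (case \<phi> of InfS xs \<psi> P pos \<Rightarrow>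
      distinct xs \<and> fv \<psi> \<subseteq> set xs \<and> fm_over \<Sigma> \<psi> \<and> (P, length xs) \<in> \<Sigma>)"

definition O_inf :: "'p inf \<Rightarrow> ('p, 'd) struct4 \<Rightarrow> ('p, 'd) struct4" where
  "O_inf \<phi> J = (case \<phi> of InfS xs \<psi> P pos \<Rightarrow>
      J(P := (\<lambda>ds. if length ds = length xs \<and> leq_p T (val4 J (assign xs ds) \<psi>)
                   then lub_p {if pos then T else F, J P ds} else J P ds)))"

definition S_inf :: "'p inf \<Rightarrow> ('p \<times> bool, 's) symstruct \<Rightarrow> ('p \<times> bool, 's) symstruct" where
  "S_inf \<phi> \<Phi> = (case \<phi> of InfS xs \<psi> P pos \<Rightarrow>
      \<Phi>((P, pos) := query_union (\<Phi> (P, pos)) (xs, sym_fm \<Phi> (ct \<psi>))))"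

end

theory Submission
  imports Defs
begin

(* A four-valued truth value is determined by its two bits "at least t" and "at least f" in the
   precision order, and tf stores exactly these bits, so it is a bijection. On bits, glb_t and
   lub_t are the and/or combinations that define ct and cf, hence val4 is read off tf by ct and cf.
   The propagator O_phi can only switch on the bit (P, pos), namely on the tuples where psi is at
   least true, i.e. where psi^ct holds in tf; the query union in S_phi adds exactly this disjunct
   to the query of (P, pos) and leaves all other queries alone. *)

(* u = 00, t = 10, f = 01, i = 11, the bits of x being leq_p T x and leq_p F x. *)
definition tv_of_bits :: "bool \<Rightarrow> bool \<Rightarrow> tv" where
  "tv_of_bits p q = (if p then (if q then I else T) else (if q then F else U))"

lemma tv_of_bits_bits [simp]:
  "leq_p T (tv_of_bits p q) = p" "leq_p F (tv_of_bits p q) = q"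
  by (auto simp: tv_of_bits_def leq_p_def)

lemma leq_p_T_F [simp]: "leq_p T T" "leq_p F F" "\<not> leq_p T F" "\<not> leq_p F T"
  by (simp_all add: leq_p_def)

lemma tv_eq_iff_bits: "x = y \<longleftrightarrow> leq_p T x = leq_p T y \<and> leq_p F x = leq_p F y"
  by (cases x; cases y) (simp_all add: leq_p_def)

lemma leq_t_iff_bits: "leq_t a b \<longleftrightarrow> (leq_p T a \<longrightarrow> leq_p T b) \<and> (leq_p F b \<longrightarrow> leq_p F a)"
  by (cases a; cases b) (simp_all add: leq_t_def leq_p_def)

lemma leq_p_iff_bits: "leq_p a b \<longleftrightarrow> (leq_p T a \<longrightarrow> leq_p T b) \<and> (leq_p F a \<longrightarrow> leq_p F b)"
  by (cases a; cases b) (simp_all add: leq_p_def)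

lemma leq_t_antisym: "leq_t a b \<Longrightarrow> leq_t b a \<Longrightarrow> a = b"
  by (cases a; cases b) (simp_all add: leq_t_def)

lemma leq_p_antisym: "leq_p a b \<Longrightarrow> leq_p b a \<Longrightarrow> a = b"
  by (cases a; cases b) (simp_all add: leq_p_def)

lemma the_glb_eqI:
  assumes "\<And>a b. le a b \<Longrightarrow> le b a \<Longrightarrow> a = b"
    and "\<forall>x\<in>S. le m x" and "\<And>h. \<forall>x\<in>S. le h x \<Longrightarrow> le h m"
  shows "(THE g. (\<forall>x\<in>S. le g x) \<and> (\<forall>h. (\<forall>x\<in>S. le h x) \<longrightarrow> le h g)) = m"
  using assms by (intro the_equality) blast+

lemma glb_t_eq: "glb_t S = tv_of_bits (\<forall>x\<in>S. leq_p T x) (\<exists>x\<in>S. leq_p F x)"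
  unfolding glb_t_def
  by (rule the_glb_eqI) (auto simp: leq_t_iff_bits intro: leq_t_antisym)

lemma lub_t_eq: "lub_t S = tv_of_bits (\<exists>x\<in>S. leq_p T x) (\<forall>x\<in>S. leq_p F x)"
  unfolding lub_t_def
  by (rule the_glb_eqI[where le = "\<lambda>a b. leq_t b a"]) (auto simp: leq_t_iff_bits intro: leq_t_antisym)

lemma lub_p_eq: "lub_p S = tv_of_bits (\<exists>x\<in>S. leq_p T x) (\<exists>x\<in>S. leq_p F x)"
  unfolding lub_p_def
proof (rule the_glb_eqI[where le = "\<lambda>a b. leq_p b a"])
  show "\<forall>x\<in>S. leq_p x (tv_of_bits (\<exists>x\<in>S. leq_p T x) (\<exists>x\<in>S. leq_p F x))"
  proof
    fix x assume "x \<in> S"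
    then show "leq_p x (tv_of_bits (\<exists>x\<in>S. leq_p T x) (\<exists>x\<in>S. leq_p F x))"
      by (subst leq_p_iff_bits) auto
  qed
  show "leq_p (tv_of_bits (\<exists>x\<in>S. leq_p T x) (\<exists>x\<in>S. leq_p F x)) h" if "\<forall>x\<in>S. leq_p x h" for h
  proof -
    have "(leq_p T x \<longrightarrow> leq_p T h) \<and> (leq_p F x \<longrightarrow> leq_p F h)" if "x \<in> S" for x
      using \<open>\<forall>x\<in>S. leq_p x h\<close> that leq_p_iff_bits[of x h] by blast
    then show ?thesis
      by (subst leq_p_iff_bits) auto
  qed
qed (rule leq_p_antisym)

lemma inv_bits [simp]: "leq_p T (inv x) = leq_p F x" "leq_p F (inv x) = leq_p T x"
  by (cases x; simp add: leq_p_def)+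

lemma tf_apply: "tf J (P, b) ds = leq_p (if b then T else F) (J P ds)"
  by (simp add: tf_def)

lemma inj_tf: "inj tf"
proof (rule injI, intro ext)
  fix J K :: "('p, 'd) struct4" and P ds
  assume "tf J = tf K"
  then have "tf J (P, True) ds = tf K (P, True) ds" "tf J (P, False) ds = tf K (P, False) ds"
    by simp_all
  then show "J P ds = K P ds"
    by (simp add: tv_eq_iff_bits[of "J P ds"] tf_apply)
qed

lemma tf_tv_of_bits: "tf (\<lambda>P ds. tv_of_bits (S (P, True) ds) (S (P, False) ds)) = S"
  by (simp add: tf_def fun_eq_iff split_paired_all)

lemma tf_sym4_apply: "tf (sym4_apply \<Phi> E) = sym_apply \<Phi> E"
proof -
  have "\<exists>!J. tf J = sym_apply \<Phi> E"
    using tf_tv_of_bits inj_tf by (metis injD)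
  then show ?thesis
    unfolding sym4_apply_def by (rule theI')
qed

lemma val4_ct_cf:
  "leq_p T (val4 J a \<phi>) = eval (tf J) a (ct \<phi>) \<and> leq_p F (val4 J a \<phi>) = eval (tf J) a (cf \<phi>)"
proof (induction \<phi> arbitrary: a)
  case (Atom P xs)
  then show ?case by (simp add: tf_def)
qed (auto simp: glb_t_eq lub_t_eq)

lemma fv_ct_cf: "fv (ct \<phi>) = fv \<phi> \<and> fv (cf \<phi>) = fv \<phi>"
  by (induction \<phi>) auto

lemma atoms_ct_cf: "atoms \<phi> \<subseteq> \<Sigma> \<Longrightarrow> atoms (ct \<phi>) \<subseteq> tf_voc \<Sigma> \<and> atoms (cf \<phi>) \<subseteq> tf_voc \<Sigma>"
  by (induction \<phi>) (auto simp: tf_voc_def)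

lemma finite_fv: "finite (fv \<phi>)"
  by (induction \<phi>) auto

lemma fresh_notin: "finite S \<Longrightarrow> fresh S \<notin> S"
proof
  assume f: "finite S" and m: "fresh S \<in> S"
  then have "fresh S = Suc (Max S)"
    by (auto simp: fresh_def)
  moreover have "fresh S \<le> Max S"
    using Max_ge[OF f m] .
  ultimately show False
    by simp
qed

lemma eval_cong: "(\<forall>v\<in>fv \<phi>. a v = b v) \<Longrightarrow> eval E a \<phi> = eval E b \<phi>"
proof (induction \<phi> arbitrary: a b)
  case (Atom P xs)
  then show ?case by (simp cong: map_cong)
next
  case (Neg \<phi>)
  then show ?case by simp
next
  case (Conj \<phi> \<psi>)
  have "eval E a \<phi> = eval E b \<phi>" by (rule Conj.IH(1)) (use Conj.prems in auto)
  moreover have "eval E a \<psi> = eval E b \<psi>" by (rule Conj.IH(2)) (use Conj.prems in auto)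
  ultimately show ?case by simp
next
  case (Disj \<phi> \<psi>)
  have "eval E a \<phi> = eval E b \<phi>" by (rule Disj.IH(1)) (use Disj.prems in auto)
  moreover have "eval E a \<psi> = eval E b \<psi>" by (rule Disj.IH(2)) (use Disj.prems in auto)
  ultimately show ?case by simp
next
  case (Forall x \<phi>)
  have "eval E (a(x := d)) \<phi> = eval E (b(x := d)) \<phi>" for d
    by (rule Forall.IH) (use Forall.prems in auto)
  then show ?case by simp
next
  case (Exists x \<phi>)
  have "eval E (a(x := d)) \<phi> = eval E (b(x := d)) \<phi>" for d
    by (rule Exists.IH) (use Exists.prems in auto)
  then show ?case by simp
qed

lemma fun_upd_image_Diff: "(\<sigma>(x := y)) ` B - {y} \<subseteq> \<sigma> ` (B - {x})"
  by (auto simp: image_iff)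

lemma fv_subst: "fv (subst \<sigma> \<phi>) \<subseteq> \<sigma> ` fv \<phi>"
proof (induction \<phi> arbitrary: \<sigma>)
  case (Forall x \<phi>)
  have "fv (subst (\<sigma>(x := y)) \<phi>) - {y} \<subseteq> \<sigma> ` (fv \<phi> - {x})" for y
    using Forall.IH[of "\<sigma>(x := y)"] fun_upd_image_Diff[of \<sigma> x y "fv \<phi>"] by blast
  then show ?case by (simp add: Let_def)
next
  case (Exists x \<phi>)
  have "fv (subst (\<sigma>(x := y)) \<phi>) - {y} \<subseteq> \<sigma> ` (fv \<phi> - {x})" for y
    using Exists.IH[of "\<sigma>(x := y)"] fun_upd_image_Diff[of \<sigma> x y "fv \<phi>"] by blast
  then show ?case by (simp add: Let_def)
qed fastforce+

lemma eval_comp_upd_fresh: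
  assumes "y \<notin> \<sigma> ` (fv \<phi> - {x})"
  shows "eval E (a(y := d) \<circ> \<sigma>(x := y)) \<phi> = eval E ((a \<circ> \<sigma>)(x := d)) \<phi>"
  using assms by (intro eval_cong) auto

lemma eval_subst: "eval E a (subst \<sigma> \<phi>) = eval E (a \<circ> \<sigma>) \<phi>"
  by (induction \<phi> arbitrary: a \<sigma>)
    (simp_all add: Let_def eval_comp_upd_fresh fresh_notin finite_fv cong: map_cong)

lemma ren_mem: "length xs = length ys \<Longrightarrow> v \<in> set xs \<Longrightarrow> ren xs ys v \<in> set ys"
  by (auto simp: ren_def split: option.split dest: map_of_SomeD set_zip_rightD)

lemma comp_ren_eq_assign:
  assumes "distinct xs" "length xs = length ys" "v \<in> set xs"
  shows "a (ren xs ys v) = assign xs (map a ys) v"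
proof -
  obtain i where "i < length xs" "v = xs ! i"
    using assms(3) by (auto simp: in_set_conv_nth)
  with assms show ?thesis
    by (simp add: ren_def assign_def map_of_zip_nth)
qed

lemma map_assign: "distinct xs \<Longrightarrow> length ds = length xs \<Longrightarrow> map (assign xs ds) xs = ds"
  by (simp add: assign_def map_of_zip_nth list_eq_iff_nth_eq)

lemma eval_subst_ren:
  assumes "distinct xs" "length xs = length ys" "fv \<chi> \<subseteq> set xs"
  shows "eval E a (subst (ren xs ys) \<chi>) = eval E (assign xs (map a ys)) \<chi>"
  unfolding eval_subst
proof (rule eval_cong, intro ballI)
  fix v assume "v \<in> fv \<chi>"
  with assms show "(a \<circ> ren xs ys) v = assign xs (map a ys) v"
    by (auto intro: comp_ren_eq_assign)
qed

definition wf_query :: "'s query \<Rightarrow> bool" where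
  "wf_query q \<longleftrightarrow> distinct (fst q) \<and> fv (snd q) \<subseteq> set (fst q)"

definition eval_query :: "('s, 'd) struct2 \<Rightarrow> 's query \<Rightarrow> 'd list \<Rightarrow> bool" where
  "eval_query E q ds \<longleftrightarrow> length ds = length (fst q) \<and> eval E (assign (fst q) ds) (snd q)"

lemma sym_apply_eq_eval_query: "sym_apply \<Phi> E Q = eval_query E (\<Phi> Q)"
  by (simp add: sym_apply_def eval_query_def fun_eq_iff)

lemma wf_query_symstruct:
  "is_symstruct \<Sigma>' \<Sigma>s \<Phi> \<Longrightarrow> (Q, n) \<in> \<Sigma>' \<Longrightarrow> wf_query (\<Phi> Q) \<and> length (fst (\<Phi> Q)) = n"
  by (simp add: is_symstruct_def wf_query_def)

lemma eval_query_union: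
  assumes "wf_query q1" "wf_query q2" "length (fst q1) = length (fst q2)"
  shows "eval_query E (query_union q1 q2) ds \<longleftrightarrow> eval_query E q1 ds \<or> eval_query E q2 ds"
proof -
  obtain xs \<psi> ys \<chi> where q: "q1 = (xs, \<psi>)" "q2 = (ys, \<chi>)"
    by fastforce
  \<comment> \<open>Since subst avoids capture, the freshness of zs is irrelevant: only its distinctness is used.\<close>
  define m where "m = fresh (set xs \<union> set ys \<union> vars \<psi> \<union> vars \<chi>)"
  define zs where "zs = [m ..< m + length xs]"
  have "query_union q1 q2 = (zs, Disj (subst (ren xs zs) \<psi>) (subst (ren ys zs) \<chi>))"
    by (simp add: query_union_def q Let_def m_def zs_def)
  moreover have "map (assign zs ds) zs = ds" if "length ds = length zs"
    using that by (simp add: zs_def map_assign)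
  ultimately show ?thesis
    using assms by (auto simp: q zs_def eval_query_def wf_query_def eval_subst_ren)
qed

lemma eval_sym_fm:
  assumes "is_symstruct \<Sigma>' \<Sigma>s \<Phi>" "atoms \<phi> \<subseteq> \<Sigma>'"
  shows "eval E a (sym_fm \<Phi> \<phi>) = eval (sym_apply \<Phi> E) a \<phi>"
  using assms(2)
proof (induction \<phi> arbitrary: a)
  case (Atom Q ys)
  then have "wf_query (\<Phi> Q)" "length (fst (\<Phi> Q)) = length ys"
    using wf_query_symstruct[OF assms(1)] by auto
  then show ?case
    by (simp add: sym_apply_def wf_query_def eval_subst_ren)
qed auto

lemma fv_sym_fm:
  assumes "is_symstruct \<Sigma>' \<Sigma>s \<Phi>" "atoms \<phi> \<subseteq> \<Sigma>'"
  shows "fv (sym_fm \<Phi> \<phi>) \<subseteq> fv \<phi>"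
  using assms(2)
proof (induction \<phi>)
  case (Atom Q ys)
  then have "wf_query (\<Phi> Q)" "length (fst (\<Phi> Q)) = length ys"
    using wf_query_symstruct[OF assms(1)] by auto
  then show ?case
    using fv_subst[of "ren (fst (\<Phi> Q)) ys" "snd (\<Phi> Q)"] ren_mem
    by (fastforce simp: wf_query_def)
qed auto

lemma eval_query_ct:
  assumes "is_symstruct (tf_voc \<Sigma>) \<Sigma>s \<Phi>" "atoms \<psi> \<subseteq> \<Sigma>"
  shows "eval_query E (xs, sym_fm \<Phi> (ct \<psi>)) ds \<longleftrightarrow>
           length ds = length xs \<and> leq_p T (val4 (sym4_apply \<Phi> E) (assign xs ds) \<psi>)"
proof -
  have "atoms (ct \<psi>) \<subseteq> tf_voc \<Sigma>"
    using atoms_ct_cf[OF assms(2)] by simp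
  then show ?thesis
    by (simp add: eval_query_def eval_sym_fm[OF assms(1)] val4_ct_cf tf_sym4_apply)
qed

lemma tf_O_inf:
  "tf (O_inf (InfS xs \<psi> P pos) J) (Q, b) ds \<longleftrightarrow>
     tf J (Q, b) ds \<or>
     (Q, b) = (P, pos) \<and> length ds = length xs \<and> leq_p T (val4 J (assign xs ds) \<psi>)"
  by (cases pos; cases b) (auto simp: O_inf_def tf_apply lub_p_eq)

theorem proposition5p7:
  fixes \<Sigma> :: "('p \<times> nat) set" and \<Sigma>s :: "('s \<times> nat) set"
    and \<phi> :: "'p inf" and \<Phi> :: "('p \<times> bool, 's) symstruct"
    and E :: "('s, 'd) struct2"
  assumes "vocab \<Sigma>" and "vocab \<Sigma>s"
    and "inf_over \<Sigma> \<phi>"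
    and "is_symstruct (tf_voc \<Sigma>) \<Sigma>s \<Phi>"
  shows "sym4_apply (S_inf \<phi> \<Phi>) E = O_inf \<phi> (sym4_apply \<Phi> E)"
proof -
  obtain xs \<psi> P pos where \<phi>: "\<phi> = InfS xs \<psi> P pos"
    by (cases \<phi>)
  with assms(3) have xs: "distinct xs" "fv \<psi> \<subseteq> set xs" and \<psi>: "atoms \<psi> \<subseteq> \<Sigma>"
    and P: "((P, pos), length xs) \<in> tf_voc \<Sigma>"
    by (auto simp: inf_over_def fm_over_def tf_voc_def)
  define J where "J = sym4_apply \<Phi> E"
  have "wf_query (xs, sym_fm \<Phi> (ct \<psi>))"
    using fv_sym_fm[OF assms(4) conjunct1[OF atoms_ct_cf[OF \<psi>]]] fv_ct_cf[of \<psi>] xs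
    by (auto simp: wf_query_def)
  moreover have "wf_query (\<Phi> (P, pos))" "length (fst (\<Phi> (P, pos))) = length xs"
    using wf_query_symstruct[OF assms(4) P] by auto
  ultimately have "sym_apply (S_inf \<phi> \<Phi>) E (Q, b) ds = tf (O_inf \<phi> J) (Q, b) ds" for Q b ds
    by (cases "(Q, b) = (P, pos)")
      (auto simp: \<phi> S_inf_def tf_O_inf J_def tf_sym4_apply sym_apply_eq_eval_query
        eval_query_union eval_query_ct[OF assms(4) \<psi>])
  then have "tf (sym4_apply (S_inf \<phi> \<Phi>) E) = tf (O_inf \<phi> J)"
    by (simp add: tf_sym4_apply fun_eq_iff split_paired_all)
  then show ?thesis
    unfolding J_def by (rule injD[OF inj_tf])
qed

end
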